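(* Let $G\subset\mathrm{SU}(2)$ be a subgroup and let $\sigma\in\operatorname{Hom}(\pi_1(M),G)$, with $[\sigma]\in E$ having global coordinates $(x,y,z)$. Then for every permutation $(x',y',z')$ of $(x,y,z)$ there is $\sigma'\in\operatorname{Hom}(\pi_1(M),G)$ whose class has global coordinates $(x',y',z')$. If in addition $-I\in G$, then each of the triples $(-x,y,-z)$, $(x,-y,-z)$, $(-x,-y,z)$ is likewise the global coordinate triple of the class of some element of $\operatorname{Hom}(\pi_1(M),G)$.
   Context: $M$ is a torus with one boundary component; $\pi_1(M)$ is the free group on $X,Y$. $E=\operatorname{Hom}(\pi_1(M),\mathrm{SU}(2))/\mathrm{SU}(2)$ (conjugation action), and the global coordinates of a class $[\sigma]\in E$ are $(\operatorname{tr}\sigma(X),\operatorname{tr}\sigma(Y),\operatorname{tr}\sigma(XY))$, which determine the class uniquely. *)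

theory Defs
  imports "HOL-Analysis.Analysis"
begin

type_synonym cmat2 = "complex^2^2"

definition mtrace :: "cmat2 \<Rightarrow> complex" where
  "mtrace A = A$1$1 + A$2$2"

definition madj :: "cmat2 \<Rightarrow> cmat2" where
  "madj A = (\<chi> i j. cnj (A$j$i))"

definition SU2 :: "cmat2 set" where
  "SU2 = {A. A ** madj A = mat 1 \<and> madj A ** A = mat 1 \<and> det A = 1}"

definition subgroup_SU2 :: "cmat2 set \<Rightarrow> bool" where
  "subgroup_SU2 G \<longleftrightarrow> G \<subseteq> SU2 \<and> mat 1 \<in> G \<and>
     (\<forall>A\<in>G. \<forall>B\<in>G. A ** B \<in> G) \<and> (\<forall>A\<in>G. matrix_inv A \<in> G)"

text \<open>Since pi_1(M) is free on X, Y, a homomorphism sigma : pi_1(M) \<rightarrow> G is the same as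
  the pair (sigma X, sigma Y) \<in> G \<times> G.\<close>
definition global_coords :: "cmat2 \<Rightarrow> cmat2 \<Rightarrow> real \<times> real \<times> real" where
  "global_coords A B = (Re (mtrace A), Re (mtrace B), Re (mtrace (A ** B)))"

end

theory Submission
  imports Defs
begin

text \<open>The Nielsen moves \<open>(A, B) \<mapsto> (B, A)\<close> and \<open>(A, B) \<mapsto> (A\<inverse>, A B)\<close> keep a pair of
  generators inside \<open>G\<close> and act on the coordinates as the transpositions \<open>x \<leftrightarrow> y\<close> and
  \<open>y \<leftrightarrow> z\<close>: the first because \<open>tr (B A) = tr (A B)\<close>, the second because in \<open>SU(2)\<close> the
  inverse is the adjoint, whose trace is the conjugate and so has the same real part. These two
  transpositions generate all permutations. Replacing \<open>A\<close> or \<open>B\<close> by its product with \<open>-I\<close>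
  negates the traces of exactly those of \<open>A, B, A B\<close> that contain it.\<close>

definition global_coords_image :: "cmat2 set \<Rightarrow> (real \<times> real \<times> real) set" where
  "global_coords_image G = {global_coords A B | A B. A \<in> G \<and> B \<in> G}"

lemma mem_global_coords_image_iff:
  "t \<in> global_coords_image G \<longleftrightarrow> (\<exists>A\<in>G. \<exists>B\<in>G. global_coords A B = t)"
  by (auto simp: global_coords_image_def)

lemma matrix_inv_eqI:
  fixes A :: "'a::semiring_1^'n^'m" and B :: "'a^'m^'n"
  assumes "A ** B = mat 1" and "B ** A = mat 1"
  shows "matrix_inv A = B"
proof -
  let ?M = "matrix_inv A"
  have inv: "A ** ?M = mat 1 \<and> ?M ** A = mat 1"
    unfolding matrix_inv_def by (rule someI[of _ B]) (use assms in blast)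
  have "?M = (B ** A) ** ?M" using assms(2) by simp
  also have "\<dots> = B ** (A ** ?M)" by (simp add: matrix_mul_assoc)
  also have "\<dots> = B" using inv by simp
  finally show ?thesis .
qed

lemma SU2_matrix_inv: "A \<in> SU2 \<Longrightarrow> matrix_inv A = madj A"
  by (rule matrix_inv_eqI) (simp_all add: SU2_def)

lemma matrix_mul_uminus_left: "(- A :: 'a::ring_1^'n^'m) ** B = - (A ** B)"
  by (simp add: matrix_matrix_mult_def vec_eq_iff sum_negf)

lemma matrix_mul_uminus_right: "(A :: 'a::ring_1^'n^'m) ** (- B) = - (A ** B)"
  by (simp add: matrix_matrix_mult_def vec_eq_iff sum_negf)

lemma mtrace_eq_trace: "mtrace A = trace A"
  by (simp add: mtrace_def trace_def sum_2)

lemma mtrace_mult_commute: "mtrace (A ** B) = mtrace (B ** A)"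
  unfolding mtrace_eq_trace by (rule trace_mul_sym)

lemma mtrace_madj: "mtrace (madj A) = cnj (mtrace A)"
  by (simp add: mtrace_def madj_def)

lemma mtrace_uminus: "mtrace (- A) = - mtrace A"
  by (simp add: mtrace_def)

lemma global_coords_swap:
  "global_coords A B = (x, y, z) \<Longrightarrow> global_coords B A = (y, x, z)"
  by (simp add: global_coords_def mtrace_mult_commute)

lemma global_coords_inverse_mult:
  assumes "A \<in> SU2" and "global_coords A B = (x, y, z)"
  shows "global_coords (matrix_inv A) (A ** B) = (x, z, y)"
proof -
  have "madj A ** (A ** B) = B"
    using assms(1) by (simp add: SU2_def matrix_mul_assoc)
  then show ?thesis
    using assms by (simp add: SU2_matrix_inv global_coords_def mtrace_madj)
qed

lemma global_coords_uminus_left: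
  "global_coords A B = (x, y, z) \<Longrightarrow> global_coords (- A) B = (- x, y, - z)"
  by (simp add: global_coords_def mtrace_uminus matrix_mul_uminus_left)

lemma global_coords_uminus_right:
  "global_coords A B = (x, y, z) \<Longrightarrow> global_coords A (- B) = (x, - y, - z)"
  by (simp add: global_coords_def mtrace_uminus matrix_mul_uminus_right)

lemma subgroup_SU2_uminus_closed:
  assumes "subgroup_SU2 G" and "- mat 1 \<in> G" and "A \<in> G"
  shows "- A \<in> G"
proof -
  have "(- mat 1) ** A \<in> G" using assms unfolding subgroup_SU2_def by blast
  then show ?thesis by (simp add: matrix_mul_uminus_left)
qed

lemma global_coords_image_swap12:
  "(x, y, z) \<in> global_coords_image G \<Longrightarrow> (y, x, z) \<in> global_coords_image G"
  unfolding mem_global_coords_image_iff using global_coords_swap by blast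

lemma global_coords_image_swap23:
  assumes G: "subgroup_SU2 G" and "(x, y, z) \<in> global_coords_image G"
  shows "(x, z, y) \<in> global_coords_image G"
proof -
  obtain A B where "A \<in> G" "B \<in> G" "global_coords A B = (x, y, z)"
    using assms(2) by (auto simp: mem_global_coords_image_iff)
  moreover from G \<open>A \<in> G\<close> \<open>B \<in> G\<close> have "A \<in> SU2" "matrix_inv A \<in> G" "A ** B \<in> G"
    unfolding subgroup_SU2_def by auto
  ultimately show ?thesis
    unfolding mem_global_coords_image_iff using global_coords_inverse_mult by blast
qed

lemma global_coords_image_negate13:
  assumes G: "subgroup_SU2 G" and minus_I: "- mat 1 \<in> G"
    and "(x, y, z) \<in> global_coords_image G"
  shows "(- x, y, - z) \<in> global_coords_image G"
proof -
  obtain A B where "A \<in> G" "B \<in> G" "global_coords A B = (x, y, z)"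
    using assms(3) by (auto simp: mem_global_coords_image_iff)
  moreover have "- A \<in> G" using subgroup_SU2_uminus_closed[OF G minus_I \<open>A \<in> G\<close>] .
  ultimately show ?thesis
    unfolding mem_global_coords_image_iff using global_coords_uminus_left by blast
qed

lemma global_coords_image_negate23:
  assumes G: "subgroup_SU2 G" and minus_I: "- mat 1 \<in> G"
    and "(x, y, z) \<in> global_coords_image G"
  shows "(x, - y, - z) \<in> global_coords_image G"
proof -
  obtain A B where "A \<in> G" "B \<in> G" "global_coords A B = (x, y, z)"
    using assms(3) by (auto simp: mem_global_coords_image_iff)
  moreover have "- B \<in> G" using subgroup_SU2_uminus_closed[OF G minus_I \<open>B \<in> G\<close>] .
  ultimately show ?thesis
    unfolding mem_global_coords_image_iff using global_coords_uminus_right by blast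
qed

theorem proposition3p1:
  fixes G :: "cmat2 set" and A B :: cmat2 and x y z :: real
  assumes "subgroup_SU2 G"
    and "A \<in> G" and "B \<in> G"
    and "global_coords A B = (x, y, z)"
  shows "(\<forall>t \<in> {(x,y,z), (x,z,y), (y,x,z), (y,z,x), (z,x,y), (z,y,x)}.
            \<exists>A'\<in>G. \<exists>B'\<in>G. global_coords A' B' = t)
       \<and> (- mat 1 \<in> G \<longrightarrow>
            (\<forall>t \<in> {(-x,y,-z), (x,-y,-z), (-x,-y,z)}.
               \<exists>A'\<in>G. \<exists>B'\<in>G. global_coords A' B' = t))"
proof -
  note swap12 = global_coords_image_swap12
  note swap23 = global_coords_image_swap23[OF \<open>subgroup_SU2 G\<close>]
  have xyz: "(x, y, z) \<in> global_coords_image G"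
    using assms(2-4) by (auto simp: mem_global_coords_image_iff)
  have "{(x,y,z), (x,z,y), (y,x,z), (y,z,x), (z,x,y), (z,y,x)} \<subseteq> global_coords_image G"
    using xyz swap23[OF xyz] swap12[OF xyz] swap23[OF swap12[OF xyz]]
      swap12[OF swap23[OF xyz]] swap12[OF swap23[OF swap12[OF xyz]]]
    by simp
  moreover have "{(-x,y,-z), (x,-y,-z), (-x,-y,z)} \<subseteq> global_coords_image G"
    if minus_I: "- mat 1 \<in> G"
  proof -
    note negate13 = global_coords_image_negate13[OF \<open>subgroup_SU2 G\<close> minus_I]
    note negate23 = global_coords_image_negate23[OF \<open>subgroup_SU2 G\<close> minus_I]
    show ?thesis using negate13[OF xyz] negate23[OF xyz] negate23[OF negate13[OF xyz]] by simp
  qed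
  ultimately show ?thesis
    unfolding mem_global_coords_image_iff[symmetric] by blast
qed

end
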